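(* For every subdistribution $\mu$ on $\Sigma$, state assertion $A$ and $p\in[0,1]$: $\mu\vDash(\mathbb{P}[A]=p)\oplus\top$ iff $\mathbb{P}_\mu[A]\ge p$, where $\mathbb{P}_\mu[A]=\sum\{\mu(\sigma):\sigma\in\mathsf{supp}(\mu),\ \sigma\vDash_\Sigma A\}$.
   Context: A subdistribution on a countable set $\Sigma$ is $\mu\colon\Sigma\to[0,1]$ with $|\mu|=\sum_\sigma\mu(\sigma)\le1$; $\mathsf{supp}(\mu)=\{\sigma:\mu(\sigma)>0\}$; $\mu_1+\mu_2$ is the pointwise sum, defined when $|\mu_1|+|\mu_2|\le1$. $\mu\vDash\mathbb{P}[A]=p$ iff $|\mu|=p$ and every $\sigma\in\mathsf{supp}(\mu)$ satisfies $A$; $\mu\vDash\top$ always; $\mu\vDash\varphi\oplus\psi$ iff $\mu=\mu_1+\mu_2$ with $\mu_1\vDash\varphi$, $\mu_2\vDash\psi$. *)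

theory Defs
  imports "HOL-Analysis.Analysis"
begin

definition subdist :: "('a::countable \<Rightarrow> real) \<Rightarrow> bool" where
  "subdist \<mu> \<longleftrightarrow> (\<forall>s. 0 \<le> \<mu> s \<and> \<mu> s \<le> 1) \<and> \<mu> summable_on UNIV \<and> infsum \<mu> UNIV \<le> 1"

definition mass :: "('a::countable \<Rightarrow> real) \<Rightarrow> real" where
  "mass \<mu> = infsum \<mu> UNIV"

definition supp :: "('a \<Rightarrow> real) \<Rightarrow> 'a set" where
  "supp \<mu> = {s. \<mu> s > 0}"

datatype 'a assn = ProbEq "'a \<Rightarrow> bool" real | Top | Oplus "'a assn" "'a assn"

fun sat :: "('a::countable \<Rightarrow> real) \<Rightarrow> 'a assn \<Rightarrow> bool" where
  "sat \<mu> (ProbEq A p) \<longleftrightarrow> mass \<mu> = p \<and> (\<forall>s\<in>supp \<mu>. A s)"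
| "sat \<mu> Top \<longleftrightarrow> True"
| "sat \<mu> (Oplus \<phi> \<psi>) \<longleftrightarrow>
     (\<exists>\<mu>1 \<mu>2. subdist \<mu>1 \<and> subdist \<mu>2 \<and> mass \<mu>1 + mass \<mu>2 \<le> 1 \<and>
        \<mu> = (\<lambda>s. \<mu>1 s + \<mu>2 s) \<and> sat \<mu>1 \<phi> \<and> sat \<mu>2 \<psi>)"

definition prob :: "('a::countable \<Rightarrow> real) \<Rightarrow> ('a \<Rightarrow> bool) \<Rightarrow> real" where
  "prob \<mu> A = infsum \<mu> {s \<in> supp \<mu>. A s}"

end

theory Submission
  imports Defs
begin

text \<open>Splitting \<open>\<mu>\<close> as \<open>\<nu> + (\<mu> - \<nu>)\<close> shows that \<open>\<mu> \<Turnstile> \<phi> \<oplus> \<top>\<close> holds exactly when some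
  subdistribution \<open>\<nu> \<le> \<mu>\<close> satisfies \<open>\<phi>\<close>. A \<open>\<nu> \<le> \<mu>\<close> supported on \<open>A\<close> has mass at most
  \<open>\<P>\<^sub>\<mu>[A]\<close>; conversely, scaling the restriction of \<open>\<mu>\<close> to \<open>A\<close> by \<open>p / \<P>\<^sub>\<mu>[A]\<close> yields such
  a \<open>\<nu>\<close> of mass exactly \<open>p\<close>.\<close>

lemma subdist_dominated:
  assumes "subdist \<mu>" and "\<And>s. 0 \<le> \<nu> s" and "\<And>s. \<nu> s \<le> \<mu> s"
  shows "subdist \<nu>"
proof -
  have \<mu>: "\<mu> summable_on UNIV" "infsum \<mu> UNIV \<le> 1" "\<And>s. \<mu> s \<le> 1"
    using assms(1) by (auto simp: subdist_def)
  have \<nu>: "\<nu> summable_on UNIV"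
    using summable_on_comparison_test[OF \<mu>(1)] assms(2,3) by blast
  have "infsum \<nu> UNIV \<le> infsum \<mu> UNIV"
    using \<nu> \<mu>(1) assms(3) by (rule infsum_mono)
  moreover have "\<nu> s \<le> 1" for s
    using assms(3) \<mu>(3) order_trans by blast
  ultimately show ?thesis
    using \<nu> \<mu>(2) assms(2) by (auto simp: subdist_def)
qed

lemma mass_add:
  assumes "\<mu> summable_on UNIV" and "\<nu> summable_on UNIV"
  shows "mass (\<lambda>s. \<mu> s + \<nu> s) = mass \<mu> + mass \<nu>"
  unfolding mass_def using assms by (rule infsum_add)

lemma sat_Oplus_Top_iff:
  assumes "subdist \<mu>"
  shows "sat \<mu> (Oplus \<phi> Top) \<longleftrightarrow> (\<exists>\<nu>. subdist \<nu> \<and> (\<forall>s. \<nu> s \<le> \<mu> s) \<and> sat \<nu> \<phi>)"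
proof
  assume "sat \<mu> (Oplus \<phi> Top)"
  then obtain \<mu>1 \<mu>2 where "subdist \<mu>1" "subdist \<mu>2" "\<mu> = (\<lambda>s. \<mu>1 s + \<mu>2 s)" "sat \<mu>1 \<phi>"
    by auto
  then show "\<exists>\<nu>. subdist \<nu> \<and> (\<forall>s. \<nu> s \<le> \<mu> s) \<and> sat \<nu> \<phi>"
    by (auto simp: subdist_def)
next
  assume "\<exists>\<nu>. subdist \<nu> \<and> (\<forall>s. \<nu> s \<le> \<mu> s) \<and> sat \<nu> \<phi>"
  then obtain \<nu> where \<nu>: "subdist \<nu>" "\<And>s. \<nu> s \<le> \<mu> s" "sat \<nu> \<phi>"
    by blast
  define \<rho> where "\<rho> = (\<lambda>s. \<mu> s - \<nu> s)"
  have "\<And>s. 0 \<le> \<nu> s"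
    using \<nu>(1) by (simp add: subdist_def)
  then have \<rho>: "subdist \<rho>"
    using subdist_dominated[OF assms] \<nu>(2) by (simp add: \<rho>_def)
  have split: "\<mu> = (\<lambda>s. \<nu> s + \<rho> s)"
    by (simp add: \<rho>_def)
  have "mass \<nu> + mass \<rho> = mass \<mu>"
    using mass_add[of \<nu> \<rho>] \<nu>(1) \<rho> by (simp add: subdist_def flip: split)
  also have "\<dots> \<le> 1"
    using assms by (simp add: subdist_def mass_def)
  finally show "sat \<mu> (Oplus \<phi> Top)"
    using \<nu>(1,3) \<rho> split by auto
qed

lemma prob_eq_infsum:
  assumes "\<And>s. 0 \<le> \<mu> s"
  shows "prob \<mu> A = infsum \<mu> {s. A s}"
  unfolding prob_def supp_def
  by (rule infsum_cong_neutral) (use assms in \<open>auto simp: order_less_le\<close>)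

lemma mass_le_prob:
  assumes "subdist \<mu>" and "subdist \<nu>" and "\<And>s. \<nu> s \<le> \<mu> s" and "\<forall>s\<in>supp \<nu>. A s"
  shows "mass \<nu> \<le> prob \<mu> A"
proof -
  have \<nu>: "\<And>s. 0 \<le> \<nu> s" "\<nu> summable_on UNIV" and \<mu>: "\<And>s. 0 \<le> \<mu> s" "\<mu> summable_on UNIV"
    using assms(1,2) by (auto simp: subdist_def)
  have "mass \<nu> = infsum \<nu> {s. A s}"
    unfolding mass_def
    by (rule infsum_cong_neutral) (use \<nu>(1) assms(4) in \<open>auto simp: supp_def order_less_le\<close>)
  also have "\<dots> \<le> infsum \<mu> {s. A s}"
    using summable_on_subset_banach[OF \<nu>(2)] summable_on_subset_banach[OF \<mu>(2)] assms(3)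
    by (intro infsum_mono) auto
  also have "\<dots> = prob \<mu> A"
    using prob_eq_infsum[where \<mu> = \<mu>] \<mu>(1) by simp
  finally show ?thesis .
qed

lemma subdist_below_with_mass_on:
  assumes "subdist \<mu>" and "0 \<le> p" and "p \<le> prob \<mu> A"
  obtains \<nu> where "subdist \<nu>" and "\<And>s. \<nu> s \<le> \<mu> s" and "mass \<nu> = p" and "\<forall>s\<in>supp \<nu>. A s"
proof -
  have \<mu>: "\<And>s. 0 \<le> \<mu> s" "\<mu> summable_on UNIV"
    using assms(1) by (auto simp: subdist_def)
  define q where "q = prob \<mu> A"
  define \<mu>A where "\<mu>A = (\<lambda>s. if A s then \<mu> s else 0)"
  define \<nu> where "\<nu> = (\<lambda>s. p / q * \<mu>A s)"
  have "0 \<le> q" "p / q \<le> 1"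
    using assms(2,3) by (auto simp: q_def divide_le_eq_1)
  then have \<nu>_bounds: "0 \<le> \<nu> s" "\<nu> s \<le> \<mu> s" for s
    using \<mu>(1)[of s] assms(2) mult_left_le_one_le[of "\<mu> s" "p / q"] by (auto simp: \<nu>_def \<mu>A_def)
  have "mass \<mu>A = q"
    unfolding mass_def q_def prob_eq_infsum[where \<mu> = \<mu>, OF \<mu>(1)] \<mu>A_def
    by (rule infsum_cong_neutral) auto
  \<comment> \<open>If \<open>q = 0\<close> then \<open>p = 0\<close>, matching the junk value \<open>p / 0 = 0\<close>.\<close>
  then have "mass \<nu> = p"
    using assms(2,3) unfolding mass_def \<nu>_def infsum_cmult_right' by (simp add: q_def)
  moreover have "\<forall>s\<in>supp \<nu>. A s"
    by (simp add: supp_def \<nu>_def \<mu>A_def)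
  ultimately show ?thesis
    using that subdist_dominated[OF assms(1)] \<nu>_bounds by blast
qed

theorem lemmaB5:
  fixes \<mu> :: "'a::countable \<Rightarrow> real" and A :: "'a \<Rightarrow> bool" and p :: real
  assumes "subdist \<mu>" and "0 \<le> p" and "p \<le> 1"
  shows "sat \<mu> (Oplus (ProbEq A p) Top) \<longleftrightarrow> prob \<mu> A \<ge> p"
proof -
  have "sat \<mu> (Oplus (ProbEq A p) Top) \<longleftrightarrow>
        (\<exists>\<nu>. subdist \<nu> \<and> (\<forall>s. \<nu> s \<le> \<mu> s) \<and> mass \<nu> = p \<and> (\<forall>s\<in>supp \<nu>. A s))"
    unfolding sat_Oplus_Top_iff[OF assms(1)] by simp
  also have "\<dots> \<longleftrightarrow> prob \<mu> A \<ge> p"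
    using mass_le_prob[OF assms(1)] subdist_below_with_mass_on[OF assms(1,2)] by metis
  finally show ?thesis .
qed

end
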